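(* Let $r_1,r_2,r_3$ be pairwise distinct integers with $r_1<0<r_3$ and $\gcd(r_1,r_2,r_3)=1$, and let $v_2\in\mathbb{N}\cup\{\infty\}$. Then $S_{(r_1,r_2,r_3)}^{(\infty,v_2,\infty)}=\mathbb{Z}$ if and only if (A) $S_{(r_1,r_3)}^{(\infty,\infty)}=\mathbb{Z}$, or (B) $r_2\notin S_{(r_1,r_3)}^{(\infty,\infty)}=\langle d'\rangle$, where $d'=\gcd(r_1,r_3)$, and $v_2\geq d'-1$ (with the convention $\infty\ge m$ for every integer $m$).
   Context: Let $L$ be an infinite-dimensional vector space over a field $F$ (of characteristic different from $2$) with basis $e_1,e_2,\dots$, and let $E$ be the Grassmann algebra of $L$: the unital associative algebra generated by $L$ subject to $e_ie_j=-e_je_i$; it has basis consisting of $1$ and the monomials $e_{i_1}\cdots e_{i_k}$ with $i_1<\dots<i_k$. Given pairwise distinct integers $r_1,\dots,r_n$ (lower indices) and $v_1,\dots,v_n\in\mathbb{N}\cup\{\infty\}$ (upper indices), split the basis $\{e_i\}$ into $n$ disjoint sets, the $j$-th of cardinality $v_j$ and spanning a subspace $L_{r_j}^{v_j}$, so $L=L_{r_1}^{v_1}\oplus\cdots\oplus L_{r_n}^{v_n}$. Declare $\|e_k\|=r_j$ iff $e_k\in L_{r_j}^{v_j}$, and $\|e_{k_1}\cdots e_{k_s}\|=\|e_{k_1}\|+\cdots+\|e_{k_s}\|$. This defines a $\mathbb{Z}$-grading $E_{(r_1,\dots,r_n)}^{(v_1,\dots,v_n)}=\bigoplus_{r\in\mathbb{Z}}A_r$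 on $E$ ($A_r$ spanned by the monomials of degree $r$), called an $n$-induced $\mathbb{Z}$-grading. Its support is $S_{(r_1,\dots,r_n)}^{(v_1,\dots,v_n)}=\{r\in\mathbb{Z}: A_r\neq 0\}$. For $d\in\mathbb{Z}$, $\langle d\rangle=d\mathbb{Z}$. *)

theory Defs
  imports Main "HOL-Library.Extended_Nat"
begin

definition ecard :: "nat set \<Rightarrow> enat" where
  "ecard A = (if finite A then enat (card A) else \<infinity>)"

text \<open>The basis of L is e_0, e_1, ... (indexed by nat). A splitting of the basis into n
  disjoint sets is given by a block function blk: e_k lies in the block blk k < n.
  The list rs gives the lower indices r_1..r_n, vs the upper indices v_1..v_n.
  induced_partition rs vs blk: the j-th block has cardinality vs!j and the lower
  indices are pairwise distinct.\<close>
definition induced_partition :: "int list \<Rightarrow> enat list \<Rightarrow> (nat \<Rightarrow> nat) \<Rightarrow> bool" where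
  "induced_partition rs vs blk \<longleftrightarrow>
     length vs = length rs \<and> distinct rs \<and> (\<forall>k. blk k < length rs) \<and>
     (\<forall>j < length rs. ecard {k. blk k = j} = vs ! j)"

text \<open>Degree of the monomial e_{k_1}...e_{k_s} with index set M: sum of the degrees
  of its factors, where deg e_k = rs ! blk k. The monomials (finite index sets M, the
  empty set giving 1) form a basis of E, so A_r is nonzero iff some monomial has
  degree r.\<close>
definition monomial_degree :: "int list \<Rightarrow> (nat \<Rightarrow> nat) \<Rightarrow> nat set \<Rightarrow> int" where
  "monomial_degree rs blk M = (\<Sum>k\<in>M. rs ! blk k)"

definition grading_support :: "int list \<Rightarrow> (nat \<Rightarrow> nat) \<Rightarrow> int set" where
  "grading_support rs blk = {r. \<exists>M. finite M \<and> monomial_degree rs blk M = r}"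

definition int_multiples :: "int \<Rightarrow> int set" where
  "int_multiples d = {d * k | k. True}"

end

theory Submission
  imports Defs
begin

text \<open>A monomial with \<open>a\<close>, \<open>b\<close>, \<open>c\<close> factors from the three blocks has degree
  \<open>a r\<^sub>1 + b r\<^sub>2 + c r\<^sub>3\<close>, where only \<open>b \<le> v\<^sub>2\<close> is constrained. Since \<open>r\<^sub>1 < 0 < r\<^sub>3\<close>,
  the nonnegative combinations of \<open>r\<^sub>1, r\<^sub>3\<close> are exactly the multiples of \<open>d' = gcd r\<^sub>1 r\<^sub>3\<close>,
  so the support is everything iff the residues of \<open>b r\<^sub>2\<close>, \<open>0 \<le> b \<le> v\<^sub>2\<close>, cover \<open>\<int>/d'\<close>.
  As \<open>r\<^sub>2\<close> is a unit modulo \<open>d'\<close>, these residues are distinct, so this happens iff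
  \<open>v\<^sub>2 \<ge> d' - 1\<close>. Alternative (A) is the case \<open>d' = 1\<close> and (B) the case \<open>d' > 1\<close>,
  in which \<open>r\<^sub>2 \<notin> \<langle>d'\<rangle>\<close> is automatic.\<close>

lemma monomial_degree_eq_block_count_sum:
  assumes "finite M" and "\<forall>k. blk k < length rs"
  shows "monomial_degree rs blk M = (\<Sum>j<length rs. int (card {k\<in>M. blk k = j}) * rs ! j)"
proof -
  have "monomial_degree rs blk M = (\<Sum>j<length rs. \<Sum>k\<in>{k\<in>M. blk k = j}. rs ! blk k)"
    unfolding monomial_degree_def by (rule sum.group[symmetric]) (use assms in auto)
  also have "\<dots> = (\<Sum>j<length rs. int (card {k\<in>M. blk k = j}) * rs ! j)"
    by (rule sum.cong) auto
  finally show ?thesis .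
qed

lemma card_le_ecard:
  assumes "finite A" and "A \<subseteq> B"
  shows "enat (card A) \<le> ecard B"
  using assms card_mono[of B A] by (auto simp: ecard_def infinite_super)

lemma obtain_subset_with_ecard:
  assumes "enat n \<le> ecard B"
  obtains A where "A \<subseteq> B" and "finite A" and "card A = n"
proof (cases "finite B")
  case True
  with assms have "n \<le> card B" by (simp add: ecard_def)
  with that show ?thesis by (metis obtain_subset_with_card_n rev_finite_subset True)
next
  case False
  with that show ?thesis using infinite_arbitrarily_large by blast
qed

lemma grading_support_induced_partition:
  assumes "induced_partition rs vs blk"
  shows "grading_support rs blk =
    {\<Sum>j<length rs. int (n j) * rs ! j | n. \<forall>j<length rs. enat (n j) \<le> vs ! j}"
    (is "_ = ?sums")
proof -
  have blk: "\<forall>k. blk k < length rs"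
    and ecard_block: "\<And>j. j < length rs \<Longrightarrow> ecard {k. blk k = j} = vs ! j"
    using assms unfolding induced_partition_def by auto
  show ?thesis
  proof (intro equalityI subsetI)
    fix r assume "r \<in> grading_support rs blk"
    then obtain M where "finite M" and r: "r = monomial_degree rs blk M"
      unfolding grading_support_def by auto
    moreover have "enat (card {k\<in>M. blk k = j}) \<le> vs ! j" if "j < length rs" for j
      using card_le_ecard[of "{k\<in>M. blk k = j}" "{k. blk k = j}"] \<open>finite M\<close> ecard_block[OF that]
      by auto
    ultimately show "r \<in> ?sums"
      using monomial_degree_eq_block_count_sum[OF \<open>finite M\<close> blk]
      by (intro CollectI exI[where x="\<lambda>j. card {k\<in>M. blk k = j}"]) auto
  next
    fix r assume "r \<in> ?sums"
    then obtain n where r: "r = (\<Sum>j<length rs. int (n j) * rs ! j)"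
      and n: "\<forall>j<length rs. enat (n j) \<le> vs ! j" by auto
    have "\<exists>A. j < length rs \<longrightarrow> A \<subseteq> {k. blk k = j} \<and> finite A \<and> card A = n j" for j
    proof (cases "j < length rs")
      case True
      with n ecard_block obtain A where "A \<subseteq> {k. blk k = j}" "finite A" "card A = n j"
        by (metis obtain_subset_with_ecard)
      then show ?thesis by blast
    qed simp
    then obtain A where
      A: "\<And>j. j < length rs \<Longrightarrow> A j \<subseteq> {k. blk k = j} \<and> finite (A j) \<and> card (A j) = n j"
      by metis
    define M where "M = (\<Union>j<length rs. A j)"
    have "finite M" unfolding M_def using A by auto
    have "{k\<in>M. blk k = j} = A j" if "j < length rs" for j
      unfolding M_def using A that by blast
    then have "monomial_degree rs blk M = r"
      unfolding monomial_degree_eq_block_count_sum[OF \<open>finite M\<close> blk] r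
      by (intro sum.cong) (auto simp: A)
    with \<open>finite M\<close> show "r \<in> grading_support rs blk" unfolding grading_support_def by blast
  qed
qed

lemma grading_support_three_blocks:
  assumes "induced_partition [r1, r2, r3] [v1, v2, v3] blk"
  shows "grading_support [r1, r2, r3] blk =
    {int a * r1 + int b * r2 + int c * r3 | a b c. enat a \<le> v1 \<and> enat b \<le> v2 \<and> enat c \<le> v3}"
    (is "_ = ?abc")
proof -
  have sum3: "(\<Sum>j<length [r1, r2, r3]. f j) = f 0 + f 1 + f 2" for f :: "nat \<Rightarrow> int"
    by (simp add: numeral_eq_Suc lessThan_Suc)
  have all3: "(\<forall>j<length [r1, r2, r3]. P j) \<longleftrightarrow> P 0 \<and> P 1 \<and> P 2" for P
    by (auto simp: less_Suc_eq numeral_eq_Suc)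
  have "grading_support [r1, r2, r3] blk =
    {int (n 0) * r1 + int (n 1) * r2 + int (n 2) * r3 | n :: nat \<Rightarrow> nat.
      enat (n 0) \<le> v1 \<and> enat (n 1) \<le> v2 \<and> enat (n 2) \<le> v3}"
    (is "_ = ?n")
    unfolding grading_support_induced_partition[OF assms] sum3 all3 by simp
  also have "?n = ?abc"
  proof (intro equalityI subsetI)
    fix x assume "x \<in> ?abc"
    then obtain a b c where "x = int a * r1 + int b * r2 + int c * r3"
      and "enat a \<le> v1" "enat b \<le> v2" "enat c \<le> v3" by blast
    then show "x \<in> ?n" by (intro CollectI exI[where x="nth [a, b, c]"]) simp
  qed auto
  finally show ?thesis .
qed

lemma grading_support_two_blocks:
  assumes "induced_partition [r1, r2] [v1, v2] blk"
  shows "grading_support [r1, r2] blk =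
    {int a * r1 + int b * r2 | a b. enat a \<le> v1 \<and> enat b \<le> v2}"
    (is "_ = ?ab")
proof -
  have sum2: "(\<Sum>j<length [r1, r2]. f j) = f 0 + f 1" for f :: "nat \<Rightarrow> int"
    by (simp add: numeral_eq_Suc lessThan_Suc)
  have all2: "(\<forall>j<length [r1, r2]. P j) \<longleftrightarrow> P 0 \<and> P 1" for P
    by (auto simp: less_Suc_eq)
  have "grading_support [r1, r2] blk =
    {int (n 0) * r1 + int (n 1) * r2 | n :: nat \<Rightarrow> nat. enat (n 0) \<le> v1 \<and> enat (n 1) \<le> v2}"
    (is "_ = ?n")
    unfolding grading_support_induced_partition[OF assms] sum2 all2 by simp
  also have "?n = ?ab"
  proof (intro equalityI subsetI)
    fix x assume "x \<in> ?ab"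
    then obtain a b where "x = int a * r1 + int b * r2" and "enat a \<le> v1" "enat b \<le> v2"
      by blast
    then show "x \<in> ?n" by (intro CollectI exI[where x="nth [a, b]"]) simp
  qed auto
  finally show ?thesis .
qed

lemma mem_int_multiples_iff: "x \<in> int_multiples d \<longleftrightarrow> d dvd x"
  unfolding int_multiples_def by (auto simp: dvd_def)

lemma int_multiples_eq_UNIV_iff: "int_multiples d = UNIV \<longleftrightarrow> is_unit d"
proof
  assume "int_multiples d = UNIV"
  then show "is_unit d" using mem_int_multiples_iff[of 1 d] by simp
qed (auto simp: mem_int_multiples_iff unit_imp_dvd)

lemma nonneg_combinations_eq_int_multiples:
  fixes r s :: int
  assumes "r < 0" and "0 < s"
  shows "{int a * r + int b * s | a b. True} = int_multiples (gcd r s)"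
proof (intro equalityI subsetI)
  fix x assume "x \<in> {int a * r + int b * s | a b. True}"
  then show "x \<in> int_multiples (gcd r s)" by (auto simp: mem_int_multiples_iff)
next
  fix x assume "x \<in> int_multiples (gcd r s)"
  then obtain k where x: "x = gcd r s * k" by (auto simp: mem_int_multiples_iff)
  obtain u v where uv: "u * r + v * s = gcd r s" using bezout_int by blast
  \<comment> \<open>Shifting the Bezout coefficients by \<open>(t * s, - t * r)\<close> keeps the combination and,
    for \<open>t\<close> large, makes both coefficients nonnegative.\<close>
  define t where "t = \<bar>k * u\<bar> + \<bar>k * v\<bar>"
  define a where "a = k * u + t * s"
  define b where "b = k * v - t * r"
  have "0 \<le> t" by (simp add: t_def)
  with assms have "t \<le> t * s" and "t \<le> t * (- r)"
    using mult_left_mono[of 1 s t] mult_left_mono[of 1 "- r" t] by simp_all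
  moreover have "\<bar>k * u\<bar> \<le> t" and "\<bar>k * v\<bar> \<le> t" by (simp_all add: t_def)
  ultimately have "0 \<le> a" and "0 \<le> b"
    unfolding a_def b_def by (simp_all add: abs_le_iff)
  moreover have "x = a * r + b * s"
    unfolding x a_def b_def uv[symmetric] by (simp add: algebra_simps)
  ultimately have "x = int (nat a) * r + int (nat b) * s" by simp
  then show "x \<in> {int a * r + int b * s | a b. True}" by blast
qed

lemma bounded_multiples_cover_residues_iff:
  fixes r d :: int and v :: enat
  assumes "0 < d" and "coprime r d"
  shows "(\<forall>x. \<exists>b. enat b \<le> v \<and> d dvd x - int b * r) \<longleftrightarrow> enat (nat (d - 1)) \<le> v"
proof
  assume cover: "\<forall>x. \<exists>b. enat b \<le> v \<and> d dvd x - int b * r"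
  show "enat (nat (d - 1)) \<le> v"
  proof (rule ccontr)
    assume "\<not> enat (nat (d - 1)) \<le> v"
    then have v: "v < enat (nat (d - 1))" by simp
    \<comment> \<open>As \<open>r\<close> is a unit modulo \<open>d\<close>, \<open>b * r \<equiv> (d - 1) * r\<close> forces \<open>b \<equiv> d - 1\<close>,
      which \<open>b \<le> v < d - 1\<close> rules out.\<close>
    from cover obtain b where b: "enat b \<le> v" and "d dvd (d - 1) * r - int b * r" by blast
    then have "d dvd (d - 1 - int b) * r" by (simp add: algebra_simps)
    with \<open>coprime r d\<close> have "d dvd d - 1 - int b"
      by (metis coprime_commute coprime_dvd_mult_left_iff)
    moreover from b v have "b < nat (d - 1)" by (metis enat_ord_simps(2) le_less_trans)
    then have "0 < d - 1 - int b" by linarith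
    ultimately show False using zdvd_imp_le by fastforce
  qed
next
  assume v: "enat (nat (d - 1)) \<le> v"
  obtain u w where uw: "u * r + w * d = 1"
    using bezout_int[of r d] \<open>coprime r d\<close> by (metis coprime_iff_gcd_eq_1)
  show "\<forall>x. \<exists>b. enat b \<le> v \<and> d dvd x - int b * r"
  proof
    fix x
    define b where "b = (x * u) mod d"
    have "0 \<le> b" and "b < d" unfolding b_def using \<open>0 < d\<close> by simp_all
    with v have "enat (nat b) \<le> v" by (meson enat_ord_simps(1) order_trans nat_mono zle_diff1_eq)
    have "d dvd (x * u - b) * r + x * w * d"
      unfolding b_def by (simp add: mod_eq_dvd_iff)
    also have "(x * u - b) * r + x * w * d = x - b * r"
      using uw by algebra
    finally show "\<exists>b. enat b \<le> v \<and> d dvd x - int b * r"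
      using \<open>0 \<le> b\<close> \<open>enat (nat b) \<le> v\<close> by (intro exI[where x="nat b"]) simp
  qed
qed

theorem theorem3p4:
  fixes r1 r2 r3 :: int and v2 :: enat
    and blk :: "nat \<Rightarrow> nat" and blk' :: "nat \<Rightarrow> nat"
  assumes "r1 \<noteq> r2" and "r2 \<noteq> r3" and "r1 \<noteq> r3"
    and "r1 < 0" and "0 < r3"
    and "gcd r1 (gcd r2 r3) = 1"
    and "induced_partition [r1, r2, r3] [\<infinity>, v2, \<infinity>] blk"
    and "induced_partition [r1, r3] [\<infinity>, \<infinity>] blk'"
  shows "grading_support [r1, r2, r3] blk = UNIV \<longleftrightarrow>
           (grading_support [r1, r3] blk' = UNIV \<or>
            (r2 \<notin> grading_support [r1, r3] blk' \<and>
             grading_support [r1, r3] blk' = int_multiples (gcd r1 r3) \<and>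
             enat (nat (gcd r1 r3 - 1)) \<le> v2))"
proof -
  define d where "d = gcd r1 r3"
  have "0 < d" using \<open>r1 < 0\<close> by (simp add: d_def)
  have coprime: "coprime r2 d"
    using \<open>gcd r1 (gcd r2 r3) = 1\<close> by (simp add: d_def coprime_iff_gcd_eq_1 ac_simps)
  have combinations: "{int a * r1 + int c * r3 | a c. True} = int_multiples d"
    unfolding d_def using \<open>r1 < 0\<close> \<open>0 < r3\<close> by (rule nonneg_combinations_eq_int_multiples)
  have support_r1_r3: "grading_support [r1, r3] blk' = int_multiples d"
    using grading_support_two_blocks[OF assms(8)] combinations by simp
  have mem_support_iff: "x \<in> grading_support [r1, r2, r3] blk \<longleftrightarrow> (\<exists>b. enat b \<le> v2 \<and> d dvd x - int b * r2)"
    for x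
  proof -
    have "x \<in> grading_support [r1, r2, r3] blk \<longleftrightarrow>
        (\<exists>b. enat b \<le> v2 \<and> x - int b * r2 \<in> {int a * r1 + int c * r3 | a c. True})"
      unfolding grading_support_three_blocks[OF assms(7)] by (fastforce simp: algebra_simps)
    then show ?thesis by (simp only: combinations mem_int_multiples_iff)
  qed
  have "grading_support [r1, r2, r3] blk = UNIV \<longleftrightarrow> enat (nat (d - 1)) \<le> v2"
    using bounded_multiples_cover_residues_iff[OF \<open>0 < d\<close> coprime] mem_support_iff by blast
  moreover have "int_multiples d = UNIV \<longleftrightarrow> d = 1" and "r2 \<in> int_multiples d \<longleftrightarrow> d = 1"
    using \<open>0 < d\<close> coprime by (auto simp: int_multiples_eq_UNIV_iff mem_int_multiples_iff)
  ultimately show ?thesis by (auto simp: support_r1_r3 d_def simp flip: zero_enat_def)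
qed

end
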